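(* Let $K\subset\mathbb R^2$ be a convex body with boundary of class $C^2$. Suppose that the identity $$\frac{\sin^3\alpha}{\kappa(s)}=\frac{\sin^3\beta}{\kappa(t)}$$ holds for every chord $[\gamma(s),\gamma(t)]$ in some open set $U$ of chords of $K$ that covers $\partial K$ (every point of $\partial K$ is an endpoint of some chord in $U$). Then $K$ is an ellipse.
   Context: A convex body is a compact convex set with non-empty interior; $\gamma$ is a regular parametrization of $\partial K$ and $\kappa(s)$ is the curvature of $\partial K$ at $\gamma(s)$. For a chord with endpoints $\gamma(s),\gamma(t)$, $\alpha$ is the angle between the chord and the tangent line to $\partial K$ at $\gamma(s)$ and $\beta$ is the angle between the chord and the tangent line to $\partial K$ at $\gamma(t)$. Chords are identified with pairs of boundary points, and "open" refers to this topology. *)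

theory Defs
  imports "HOL-Analysis.Analysis"
begin

text \<open>The plane is modelled as the complex numbers (a 2-dimensional real inner product space).\<close>

definition convex_body :: "complex set \<Rightarrow> bool" where
  "convex_body K \<longleftrightarrow> compact K \<and> convex K \<and> interior K \<noteq> {}"

definition vec_angle :: "complex \<Rightarrow> complex \<Rightarrow> real" where
  "vec_angle u v = arccos ((u \<bullet> v) / (norm u * norm v))"

text \<open>Angle between the lines spanned by two nonzero vectors, in [0, pi/2].\<close>
definition line_angle :: "complex \<Rightarrow> complex \<Rightarrow> real" where
  "line_angle u v = min (vec_angle u v) (pi - vec_angle u v)"

definition d1 :: "(real \<Rightarrow> complex) \<Rightarrow> real \<Rightarrow> complex" where
  "d1 \<gamma> s = vector_derivative \<gamma> (at s)"

definition d2 :: "(real \<Rightarrow> complex) \<Rightarrow> real \<Rightarrow> complex" where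
  "d2 \<gamma> s = vector_derivative (d1 \<gamma>) (at s)"

definition cross2 :: "complex \<Rightarrow> complex \<Rightarrow> real" where
  "cross2 a b = Re a * Im b - Im a * Re b"

definition curvature :: "(real \<Rightarrow> complex) \<Rightarrow> real \<Rightarrow> real" where
  "curvature \<gamma> s = \<bar>cross2 (d1 \<gamma> s) (d2 \<gamma> s)\<bar> / norm (d1 \<gamma> s) ^ 3"

text \<open>\<gamma> is an L-periodic regular C^2 parametrization of the boundary of K
  (simple closed curve: injective on one period).\<close>
definition C2_regular_boundary_param ::
    "complex set \<Rightarrow> (real \<Rightarrow> complex) \<Rightarrow> real \<Rightarrow> bool" where
  "C2_regular_boundary_param K \<gamma> L \<longleftrightarrow>
     L > 0 \<and> (\<forall>s. \<gamma> (s + L) = \<gamma> s) \<and>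
     inj_on \<gamma> {0..<L} \<and> \<gamma> ` {0..<L} = frontier K \<and>
     (\<forall>s. \<gamma> differentiable at s) \<and>
     (\<forall>s. d1 \<gamma> differentiable at s) \<and>
     continuous_on UNIV (d2 \<gamma>) \<and>
     (\<forall>s. d1 \<gamma> s \<noteq> 0)"

definition is_ellipse :: "complex set \<Rightarrow> bool" where
  "is_ellipse K \<longleftrightarrow> (\<exists>c (f::complex \<Rightarrow> complex). linear f \<and> inj f \<and> K = (\<lambda>z. c + f z) ` cball 0 1)"

end

theory Submission
  imports Defs "HOL-Library.Periodic_Fun"
begin

text \<open>
  Let \<open>\<rho> = \<bar>\<gamma>' \<times> \<gamma>''\<bar> powr (1/3)\<close> be the derivative of affine arc length and \<open>T = \<gamma>' / \<rho>\<close> the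
  affine tangent. Since \<open>K\<close> lies on one side of each tangent line, the chord identity says
  exactly that the chord \<open>\<gamma> t - \<gamma> s\<close> is parallel to \<open>T s + T t\<close>. Fix a chord \<open>(\<gamma> s\<^sub>0, \<gamma> t\<^sub>0)\<close>
  of \<open>U\<close>. For \<open>s\<close> near \<open>s\<^sub>0\<close>, subtracting the relations for \<open>(s, t\<^sub>0)\<close> and \<open>(s, t)\<close> gives a
  linear equation for \<open>T s\<close> with coefficients affine in \<open>\<gamma> s\<close>; two such equations with
  non-collinear \<open>\<gamma> t - \<gamma> t\<^sub>0\<close> show \<open>T s = A (\<gamma> s) + d\<close> near \<open>s\<^sub>0\<close>. As the boundary is nowhere
  straight the affine map is locally unique, hence global. Then \<open>T' = \<rho> A T\<close> and
  \<open>T \<times> A T = sgn (\<gamma>' \<times> \<gamma>'')\<close> is constant, which forces \<open>tr A = 0\<close>, and a Rolle argument on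
  the closed curve forces \<open>det A > 0\<close>. So the definite quadratic form \<open>(z - c) \<times> A (z - c)\<close>,
  where \<open>A c = -d\<close>, is constant along the boundary, which is therefore an ellipse; and a convex
  body bounded by an ellipse is the filled ellipse.
\<close>

lemma cross2_eq_inner: "cross2 a b = (\<i> * a) \<bullet> b"
  by (simp add: cross2_def inner_complex_def)

lemma bounded_bilinear_cross2: "bounded_bilinear cross2"
proof -
  have "bounded_bilinear (\<lambda>a. (\<bullet>) (\<i> * a))"
    by (rule bounded_bilinear.comp1[OF bounded_bilinear_inner bounded_linear_mult_right])
  then show ?thesis
    by (simp add: cross2_eq_inner[abs_def])
qed

lemmas cross2_add_left = bounded_bilinear.add_left[OF bounded_bilinear_cross2]
lemmas cross2_diff_left = bounded_bilinear.diff_left[OF bounded_bilinear_cross2]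
lemmas cross2_diff_right = bounded_bilinear.diff_right[OF bounded_bilinear_cross2]
lemmas cross2_scaleR_left = bounded_bilinear.scaleR_left[OF bounded_bilinear_cross2]
lemmas cross2_scaleR_right = bounded_bilinear.scaleR_right[OF bounded_bilinear_cross2]
lemmas cross2_minus_right = bounded_bilinear.minus_right[OF bounded_bilinear_cross2]

lemma cross2_commute: "cross2 a b = - cross2 b a"
  by (simp add: cross2_def)

lemma cross2_self [simp]: "cross2 a a = 0"
  by (simp add: cross2_def)

lemma has_real_derivative_cross2:
  assumes "(f has_vector_derivative f') (at x within S)" "(g has_vector_derivative g') (at x within S)"
  shows "((\<lambda>t. cross2 (f t) (g t)) has_real_derivative cross2 (f x) g' + cross2 f' (g x)) (at x within S)"
  using bounded_bilinear.has_vector_derivative[OF bounded_bilinear_cross2 assms]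
  by (simp add: has_real_derivative_iff_has_vector_derivative)

lemma has_real_derivative_inner_const:
  "(f has_vector_derivative f') F \<Longrightarrow> ((\<lambda>t. w \<bullet> f t) has_real_derivative w \<bullet> f') F"
  using bounded_linear.has_vector_derivative[OF bounded_linear_inner_right]
  by (simp add: has_real_derivative_iff_has_vector_derivative)

lemma cross2_square_add_inner_square: "(cross2 u v)\<^sup>2 + (u \<bullet> v)\<^sup>2 = (norm u)\<^sup>2 * (norm v)\<^sup>2"
  unfolding cmod_power2 by (simp add: cross2_def inner_complex_def algebra_simps power2_eq_square)

lemma cross2_mult_cross2_orthogonal:
  assumes "a \<bullet> u = 0"
  shows "cross2 u v * cross2 u a = (a \<bullet> v) * (norm u)\<^sup>2"
proof -
  have "cross2 u v * cross2 u a - (a \<bullet> v) * (norm u)\<^sup>2 = - (Re u * Re v + Im u * Im v) * (a \<bullet> u)"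
    unfolding cmod_power2 by (simp add: cross2_def inner_complex_def algebra_simps power2_eq_square)
  then show ?thesis
    using assms by simp
qed

lemma orthogonal_to_independent_imp_zero:
  assumes "w \<bullet> u = 0" "w \<bullet> v = 0" "cross2 u v \<noteq> 0"
  shows "w = 0"
proof -
  have "Re w * cross2 u v = Im v * (w \<bullet> u) - Im u * (w \<bullet> v)"
    and "Im w * cross2 u v = Re u * (w \<bullet> v) - Re v * (w \<bullet> u)"
    by (simp_all add: cross2_def inner_complex_def algebra_simps)
  then show ?thesis
    using assms by (simp add: complex_eq_iff)
qed

lemma cross2_basis_decomposition:
  assumes "cross2 u v \<noteq> 0"
  shows "z = (1 / cross2 u v) *\<^sub>R (cross2 z v *\<^sub>R u - cross2 z u *\<^sub>R v)"
proof -
  have "Re z * cross2 u v = cross2 z v * Re u - cross2 z u * Re v"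
    and "Im z * cross2 u v = cross2 z v * Im u - cross2 z u * Im v"
    by (simp_all add: cross2_def algebra_simps)
  then show ?thesis
    using assms by (simp add: complex_eq_iff field_simps)
qed

lemma sin_line_angle:
  assumes "u \<noteq> 0" "v \<noteq> 0"
  shows "sin (line_angle u v) = \<bar>cross2 u v\<bar> / (norm u * norm v)"
proof -
  define x where "x = (u \<bullet> v) / (norm u * norm v)"
  have nuv: "norm u * norm v > 0"
    using assms by simp
  have "\<bar>x\<bar> \<le> 1"
    using Cauchy_Schwarz_ineq2[of u v] nuv by (simp add: x_def abs_div divide_le_eq_1)
  then have "sin (arccos x) = sqrt (1 - x\<^sup>2)"
    by (intro sin_arccos) auto
  also have "1 - x\<^sup>2 = (cross2 u v)\<^sup>2 / (norm u * norm v)\<^sup>2"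
  proof -
    have "(cross2 u v)\<^sup>2 = (norm u * norm v)\<^sup>2 - (u \<bullet> v)\<^sup>2"
      using cross2_square_add_inner_square[of u v] by (simp add: power_mult_distrib)
    then show ?thesis
      using nuv assms by (simp add: x_def diff_divide_distrib power_divide)
  qed
  also have "sqrt \<dots> = \<bar>cross2 u v\<bar> / (norm u * norm v)"
    using nuv by (simp add: real_sqrt_divide)
  finally show ?thesis
    unfolding line_angle_def vec_angle_def x_def[symmetric] by (simp add: min_def)
qed

lemma sin_line_angle_cube_div:
  assumes "u \<noteq> 0" "c \<noteq> 0" "r > 0"
  shows "sin (line_angle u c) ^ 3 / (r ^ 3 / norm u ^ 3) = (\<bar>cross2 u c\<bar> / r) ^ 3 / norm c ^ 3"
  using assms by (simp add: sin_line_angle field_simps power_mult_distrib power_divide)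

fun mat2 :: "real \<times> real \<times> real \<times> real \<Rightarrow> complex \<Rightarrow> complex" where
  "mat2 (a, b, c, e) z = Complex (a * Re z + b * Im z) (c * Re z + e * Im z)"

declare mat2.simps [simp del]

lemma linear_mat2: "linear (mat2 M)"
  by (cases M) (auto intro!: linearI simp: mat2.simps complex_eq_iff algebra_simps)

lemma mat2_scaleR: "mat2 M (r *\<^sub>R z) = r *\<^sub>R mat2 M z"
  and mat2_diff: "mat2 M (z - w) = mat2 M z - mat2 M w"
  by (cases M; simp add: mat2.simps complex_eq_iff algebra_simps)+

lemma has_vector_derivative_mat2:
  "(g has_vector_derivative g') F \<Longrightarrow> ((\<lambda>x. mat2 M (g x)) has_vector_derivative mat2 M g') F"
  using bounded_linear.has_vector_derivative linear_conv_bounded_linear linear_mat2 by blast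

lemma affine_in_cross2_imp_mat2:
  assumes "cross2 u v \<noteq> 0"
  obtains M d where "\<And>z w. cross2 w u = k + cross2 p z \<Longrightarrow> cross2 w v = l + cross2 q z
    \<Longrightarrow> w = mat2 M z + d"
proof
  let ?D = "cross2 u v"
  fix z w
  assume "cross2 w u = k + cross2 p z" "cross2 w v = l + cross2 q z"
  then have "w = (1 / ?D) *\<^sub>R ((l + cross2 q z) *\<^sub>R u - (k + cross2 p z) *\<^sub>R v)"
    using cross2_basis_decomposition[OF assms, of w] by simp
  also have "\<dots> = mat2 ((- Im q * Re u + Im p * Re v) / ?D, (Re q * Re u - Re p * Re v) / ?D,
      (- Im q * Im u + Im p * Im v) / ?D, (Re q * Im u - Re p * Im v) / ?D) z
    + (1 / ?D) *\<^sub>R (l *\<^sub>R u - k *\<^sub>R v)"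
    by (simp add: mat2.simps complex_eq_iff cross2_def field_simps diff_divide_distrib add_divide_distrib)
  finally show "w = \<dots>" .
qed

lemma cross2_mat2_mat2:
  "cross2 z (mat2 (a, b, c, e) (mat2 (a, b, c, e) z)) = (a + e) * cross2 z (mat2 (a, b, c, e) z)"
  by (simp add: mat2.simps cross2_def algebra_simps)

lemma mat2_mat2_traceless:
  "e = - a \<Longrightarrow> mat2 (a, b, c, e) (mat2 (a, b, c, e) z) = - (a * e - b * c) *\<^sub>R z"
  by (simp add: mat2.simps complex_eq_iff algebra_simps)

lemma cross2_mat2_traceless_commute:
  "e = - a \<Longrightarrow> cross2 x (mat2 (a, b, c, e) y) = cross2 y (mat2 (a, b, c, e) x)"
  by (simp add: mat2.simps cross2_def algebra_simps)

lemma cross2_mat2_traceless_sum_squares: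
  "e = - a \<Longrightarrow>
    c * cross2 y (mat2 (a, b, c, e) y) = (c * Re y - a * Im y)\<^sup>2 + (a * e - b * c) * (Im y)\<^sup>2"
  by (simp add: mat2.simps cross2_def algebra_simps power2_eq_square)

lemma cross2_mat2_traceless_pos:
  assumes "e = - a" "a * e - b * c > 0" "y \<noteq> 0"
  shows "c * cross2 y (mat2 (a, b, c, e) y) > 0"
proof -
  have "c \<noteq> 0"
    using assms(1,2) by (auto simp: not_less)
  then have "(c * Re y - a * Im y)\<^sup>2 + (a * e - b * c) * (Im y)\<^sup>2 > 0"
    using assms(2,3) by (cases "Im y = 0") (auto simp: complex_eq_iff add_nonneg_pos)
  then show ?thesis
    by (simp only: cross2_mat2_traceless_sum_squares[OF assms(1)])
qed

lemma mat2_traceless_form_eq_norm_square: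
  assumes e: "e = - a" and det: "a * e - b * c > 0" and cm: "c * m > 0"
  obtains g :: "complex \<Rightarrow> complex"
  where "linear g" "inj g" "\<And>y. (norm (g y))\<^sup>2 = cross2 y (mat2 (a, b, c, e) y) / m"
proof -
  define g where "g y = (1 / sqrt (c * m)) *\<^sub>R Complex (c * Re y - a * Im y) (sqrt (a * e - b * c) * Im y)" for y
  have "c \<noteq> 0" "m \<noteq> 0"
    using cm by auto
  have "linear g"
    unfolding g_def by (rule linearI) (simp_all add: complex_eq_iff algebra_simps)
  moreover have "inj g"
    unfolding linear_injective_0[OF \<open>linear g\<close>]
  proof (intro allI impI)
    fix y
    assume "g y = 0"
    then have "Im y = 0" "c * Re y = 0"
      using cm det by (auto simp: g_def complex_eq_iff)
    then show "y = 0"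
      using \<open>c \<noteq> 0\<close> by (auto simp: complex_eq_iff)
  qed
  moreover have "(norm (g y))\<^sup>2 = cross2 y (mat2 (a, b, c, e) y) / m" for y
  proof -
    have "(norm (g y))\<^sup>2 = ((c * Re y - a * Im y)\<^sup>2 + (a * e - b * c) * (Im y)\<^sup>2) / (c * m)"
      using cm det by (simp add: g_def cmod_power2 power_mult_distrib power_divide)
    also have "\<dots> = c * cross2 y (mat2 (a, b, c, e) y) / (c * m)"
      by (simp only: cross2_mat2_traceless_sum_squares[OF e])
    finally show ?thesis
      using \<open>c \<noteq> 0\<close> by simp
  qed
  ultimately show ?thesis
    using that by blast
qed

lemma continuous_on_nonzero_sgn_eq:
  fixes G :: "'a::topological_space \<Rightarrow> real"
  assumes "connected S" "continuous_on S G" "\<And>x. x \<in> S \<Longrightarrow> G x \<noteq> 0" "x \<in> S" "y \<in> S"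
  shows "sgn (G x) = sgn (G y)"
proof (rule ccontr)
  assume "sgn (G x) \<noteq> sgn (G y)"
  then have "G x \<le> 0 \<and> 0 \<le> G y \<or> G y \<le> 0 \<and> 0 \<le> G x"
    by (auto simp: sgn_if split: if_splits)
  moreover have "connected (G ` S)"
    using assms(2,1) by (rule connected_continuous_image)
  ultimately have "0 \<in> G ` S"
    using connectedD_interval assms(4,5) by (metis imageI)
  then show False
    using assms(3) by auto
qed

lemma DERIV_eventually_const_imp_zero:
  fixes f :: "real \<Rightarrow> real"
  assumes "(f has_real_derivative l) (at x)" "\<forall>\<^sub>F y in nhds x. f y = f x"
  shows "l = 0"
proof -
  have "((\<lambda>_. f x) has_real_derivative l) (at x)"
    using assms(1) DERIV_cong_ev[OF refl assms(2) refl] by simp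
  then show ?thesis
    using DERIV_const DERIV_unique by blast
qed

lemma Rolle_DERIV:
  fixes \<phi> :: "real \<Rightarrow> real"
  assumes "a < b" "\<phi> a = \<phi> b" "\<And>x. (\<phi> has_real_derivative \<phi>' x) (at x)"
  obtains z where "a < z" "z < b" "\<phi>' z = 0"
proof -
  have "continuous_on {a..b} \<phi>"
    using assms(3) by (meson DERIV_continuous continuous_at_imp_continuous_on)
  moreover have "\<phi> differentiable (at x)" for x
    using assms(3) real_differentiable_def by blast
  ultimately obtain z where z: "a < z" "z < b" "(\<phi> has_real_derivative 0) (at z)"
    using Rolle[OF assms(1,2)] by blast
  then have "\<phi>' z = 0"
    using DERIV_unique[OF assms(3)] by metis
  then show ?thesis
    using that z by blast
qed

lemma periodic_range:
  fixes f :: "real \<Rightarrow> 'a"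
  assumes "L > 0" "\<And>x. f (x + L) = f x"
  shows "range f = f ` {0..<L}"
proof -
  interpret f: periodic_fun_simple f L
    by standard (fact assms(2))
  have "f x \<in> f ` {0..<L}" for x
  proof
    show "f x = f (x - of_int \<lfloor>x / L\<rfloor> * L)"
      by (rule f.minus_of_int[symmetric])
    show "x - of_int \<lfloor>x / L\<rfloor> * L \<in> {0..<L}"
      using floor_divide_lower[OF assms(1), of x] floor_divide_upper[OF assms(1), of x]
      by (simp add: algebra_simps)
  qed
  then show ?thesis
    by auto
qed

lemma locally_unique_witness_global:
  fixes P :: "'b \<Rightarrow> 'a::topological_space \<Rightarrow> bool"
  assumes "connected (UNIV :: 'a set)"
    and exists: "\<And>x. \<exists>p. eventually (P p) (nhds x)"
    and unique: "\<And>x p q. eventually (P p) (nhds x) \<Longrightarrow> eventually (P q) (nhds x) \<Longrightarrow> p = q"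
  shows "\<exists>p. \<forall>x. P p x"
proof -
  define w where "w x = (SOME p. eventually (P p) (nhds x))" for x
  have w: "eventually (P (w x)) (nhds x)" for x
    unfolding w_def using exists by (rule someI_ex)
  have w_locally_constant: "\<forall>\<^sub>F y in nhds x. w y = w x" for x
  proof -
    have "\<forall>\<^sub>F y in nhds x. eventually (P (w x)) (nhds y)"
      using w[of x] by (simp add: eventually_eventually)
    then show ?thesis
      by (rule eventually_mono) (use w unique in blast)
  qed
  have "w constant_on UNIV"
  proof (rule locally_constant_imp_constant[OF assms(1)])
    fix x :: 'a
    obtain S where "open S" "x \<in> S" "\<forall>y\<in>S. w y = w x"
      using w_locally_constant[of x] unfolding eventually_nhds by blast
    then show "\<exists>S. openin (top_of_set UNIV) S \<and> x \<in> S \<and> (\<forall>y\<in>S. w y = w x)"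
      by (metis open_openin subtopology_UNIV)
  qed
  then have "P (w x) y" for x y
    using w[of y] eventually_nhds_x_imp_x by (metis UNIV_I constant_on_def)
  then show ?thesis
    by blast
qed

section \<open>Regular boundary curves of convex bodies\<close>

locale convex_boundary_curve =
  fixes K :: "complex set" and \<gamma> :: "real \<Rightarrow> complex" and L :: real
  assumes convex_body: "convex_body K"
    and boundary_param: "C2_regular_boundary_param K \<gamma> L"
begin

lemma period_pos: "L > 0"
  and periodic: "\<gamma> (s + L) = \<gamma> s"
  and d1_nonzero: "d1 \<gamma> s \<noteq> 0"
  and continuous_on_d2: "continuous_on UNIV (d2 \<gamma>)"
  using boundary_param by (simp_all add: C2_regular_boundary_param_def)

lemma has_vector_derivative_d1: "(\<gamma> has_vector_derivative d1 \<gamma> s) (at s)"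
  using boundary_param unfolding C2_regular_boundary_param_def d1_def
  by (simp add: vector_derivative_works)

lemma has_vector_derivative_d2: "(d1 \<gamma> has_vector_derivative d2 \<gamma> s) (at s)"
  using boundary_param unfolding C2_regular_boundary_param_def d2_def
  by (simp add: vector_derivative_works)

lemma continuous_on_curve: "continuous_on UNIV \<gamma>"
  and continuous_on_d1: "continuous_on UNIV (d1 \<gamma>)"
  using has_vector_derivative_d1 has_vector_derivative_d2
  by (meson continuous_at_imp_continuous_on has_vector_derivative_continuous)+

lemma frontier_eq_range: "frontier K = range \<gamma>"
proof -
  have "range \<gamma> = \<gamma> ` {0..<L}"
    by (rule periodic_range[OF period_pos]) (rule periodic)
  then show ?thesis
    using boundary_param by (simp add: C2_regular_boundary_param_def)
qed

lemma curve_in_K: "\<gamma> s \<in> K"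
  using frontier_eq_range convex_body frontier_subset_closed compact_imp_closed
  unfolding convex_body_def by blast

lemma tangent_line_separates:
  assumes "z \<in> interior K"
  shows "cross2 (d1 \<gamma> s) (z - \<gamma> s) \<noteq> 0"
    and "y \<in> K \<Longrightarrow> cross2 (d1 \<gamma> s) (y - \<gamma> s) * cross2 (d1 \<gamma> s) (z - \<gamma> s) \<ge> 0"
proof -
  let ?x = "\<gamma> s" and ?u = "d1 \<gamma> s"
  have ri: "rel_interior K = interior K"
    using convex_body by (simp add: convex_body_def rel_interior_nonempty_interior)
  have "?x \<notin> rel_interior K"
    using frontier_eq_range ri by (auto simp: frontier_def)
  then obtain a where a: "\<And>y. y \<in> K \<Longrightarrow> a \<bullet> ?x \<le> a \<bullet> y" "\<And>y. y \<in> rel_interior K \<Longrightarrow> a \<bullet> ?x < a \<bullet> y"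
    using supporting_hyperplane_rel_boundary[OF _ curve_in_K] convex_body
    unfolding convex_body_def by metis
  have "a \<bullet> ?u = 0"
    by (rule DERIV_local_min[OF has_real_derivative_inner_const[OF has_vector_derivative_d1] zero_less_one])
      (use a(1) curve_in_K in blast)
  then have orth: "cross2 ?u v * cross2 ?u a = (a \<bullet> v) * (norm ?u)\<^sup>2" for v
    by (rule cross2_mult_cross2_orthogonal)
  have az: "a \<bullet> (z - ?x) > 0"
    using a(2) assms ri by (simp add: inner_diff_right)
  then show "cross2 ?u (z - ?x) \<noteq> 0"
    using orth[of "z - ?x"] d1_nonzero by auto
  show "cross2 ?u (y - ?x) * cross2 ?u (z - ?x) \<ge> 0" if "y \<in> K"
  proof -
    have "(cross2 ?u (y - ?x) * cross2 ?u (z - ?x)) * (cross2 ?u a)\<^sup>2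
        = (cross2 ?u (y - ?x) * cross2 ?u a) * (cross2 ?u (z - ?x) * cross2 ?u a)"
      by (simp add: power2_eq_square algebra_simps)
    also have "\<dots> = ((a \<bullet> (y - ?x)) * (norm ?u)\<^sup>2) * ((a \<bullet> (z - ?x)) * (norm ?u)\<^sup>2)"
      by (simp only: orth)
    also have "\<dots> \<ge> 0"
      using a(1)[OF that] az by (simp add: inner_diff_right)
    finally have "(cross2 ?u (y - ?x) * cross2 ?u (z - ?x)) * (cross2 ?u a)\<^sup>2 \<ge> 0" .
    moreover have "(cross2 ?u a)\<^sup>2 > 0"
      using orth[of "z - ?x"] az d1_nonzero by auto
    ultimately show ?thesis
      by (simp add: zero_le_mult_iff)
  qed
qed

lemma tangent_side_sign:
  obtains \<epsilon> :: real where "\<epsilon> = 1 \<or> \<epsilon> = -1" "\<And>s y. y \<in> K \<Longrightarrow> \<epsilon> * cross2 (d1 \<gamma> s) (y - \<gamma> s) \<ge> 0"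
proof -
  obtain z where z: "z \<in> interior K"
    using convex_body by (auto simp: convex_body_def)
  define G where "G s = cross2 (d1 \<gamma> s) (z - \<gamma> s)" for s
  have "continuous_on UNIV G"
    unfolding G_def
    by (intro bounded_bilinear.continuous_on[OF bounded_bilinear_cross2] continuous_intros
        continuous_on_d1 continuous_on_curve)
  then have sgn_G: "sgn (G s) = sgn (G 0)" for s
    by (rule continuous_on_nonzero_sgn_eq[OF connected_UNIV])
      (simp_all add: G_def tangent_line_separates(1)[OF z])
  show ?thesis
  proof (rule that[of "sgn (G 0)"])
    show "sgn (G 0) = 1 \<or> sgn (G 0) = -1"
      using tangent_line_separates(1)[OF z] by (simp add: G_def sgn_if)
    fix s y
    assume "y \<in> K"
    then have "cross2 (d1 \<gamma> s) (y - \<gamma> s) * G s \<ge> 0"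
      using tangent_line_separates(2)[OF z] by (simp add: G_def)
    then show "sgn (G 0) * cross2 (d1 \<gamma> s) (y - \<gamma> s) \<ge> 0"
      unfolding sgn_G[of s, symmetric] by (auto simp: sgn_if zero_le_mult_iff)
  qed
qed

lemma eventually_inner_const_imp_zero:
  assumes "cross2 (d1 \<gamma> s0) (d2 \<gamma> s0) \<noteq> 0" "\<forall>\<^sub>F s in nhds s0. w \<bullet> \<gamma> s = k"
  shows "w = 0"
proof -
  have "\<forall>\<^sub>F s in nhds s0. \<forall>\<^sub>F t in nhds s. w \<bullet> \<gamma> t = k"
    using assms(2) by (simp only: eventually_eventually)
  then have d1_orth: "\<forall>\<^sub>F s in nhds s0. w \<bullet> d1 \<gamma> s = 0"
  proof (rule eventually_mono)
    fix s
    assume ev: "\<forall>\<^sub>F t in nhds s. w \<bullet> \<gamma> t = k"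
    then have "\<forall>\<^sub>F t in nhds s. w \<bullet> \<gamma> t = w \<bullet> \<gamma> s"
      using eventually_nhds_x_imp_x[OF ev] by simp
    then show "w \<bullet> d1 \<gamma> s = 0"
      by (rule DERIV_eventually_const_imp_zero[OF has_real_derivative_inner_const[OF has_vector_derivative_d1]])
  qed
  have "w \<bullet> d1 \<gamma> s0 = 0"
    using d1_orth by (rule eventually_nhds_x_imp_x)
  moreover have "w \<bullet> d2 \<gamma> s0 = 0"
    by (rule DERIV_eventually_const_imp_zero[OF has_real_derivative_inner_const[OF has_vector_derivative_d2]])
      (use d1_orth \<open>w \<bullet> d1 \<gamma> s0 = 0\<close> in simp)
  ultimately show ?thesis
    using orthogonal_to_independent_imp_zero assms(1) by blast
qed

lemma exists_noncollinear_chords: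
  assumes "cross2 (d1 \<gamma> t0) (d2 \<gamma> t0) \<noteq> 0" "eventually P (nhds t0)"
  obtains t1 t2 where "P t1" "P t2" "cross2 (\<gamma> t1 - \<gamma> t0) (\<gamma> t2 - \<gamma> t0) \<noteq> 0"
proof -
  have "\<exists>t1 t2. P t1 \<and> P t2 \<and> cross2 (\<gamma> t1 - \<gamma> t0) (\<gamma> t2 - \<gamma> t0) \<noteq> 0"
  proof (rule ccontr)
    assume "\<not> ?thesis"
    then have collinear: "cross2 (\<gamma> t1 - \<gamma> t0) (\<gamma> t2 - \<gamma> t0) = 0" if "P t1" "P t2" for t1 t2
      using that by blast
    have same_point: "\<gamma> t1 = \<gamma> t0" if "P t1" for t1
    proof -
      have "\<forall>\<^sub>F s in nhds t0. (\<i> * (\<gamma> t1 - \<gamma> t0)) \<bullet> \<gamma> s = (\<i> * (\<gamma> t1 - \<gamma> t0)) \<bullet> \<gamma> t0"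
        using assms(2) by (rule eventually_mono)
          (use collinear[OF that] in \<open>simp add: cross2_eq_inner inner_diff_right\<close>)
      then have "\<i> * (\<gamma> t1 - \<gamma> t0) = 0"
        by (rule eventually_inner_const_imp_zero[OF assms(1)])
      then show ?thesis
        by simp
    qed
    have "\<forall>\<^sub>F s in nhds t0. 1 \<bullet> \<gamma> s = 1 \<bullet> \<gamma> t0"
      using assms(2) by (rule eventually_mono) (simp add: same_point)
    then have "(1::complex) = 0"
      by (rule eventually_inner_const_imp_zero[OF assms(1)])
    then show False
      by simp
  qed
  then show ?thesis
    using that by blast
qed

lemma eventually_mat2_unique:
  assumes "cross2 (d1 \<gamma> s0) (d2 \<gamma> s0) \<noteq> 0"
    and "\<forall>\<^sub>F s in nhds s0. mat2 M (\<gamma> s) + d = mat2 M' (\<gamma> s) + d'"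
  shows "M = M' \<and> d = d'"
proof -
  obtain a b c e where M: "M = (a, b, c, e)"
    by (cases M)
  obtain a' b' c' e' where M': "M' = (a', b', c', e')"
    by (cases M')
  have "Complex (a - a') (b - b') = 0"
    by (rule eventually_inner_const_imp_zero[OF assms(1), where k = "Re d' - Re d"],
        rule eventually_mono[OF assms(2)])
      (auto simp: M M' mat2.simps inner_complex_def complex_eq_iff algebra_simps)
  moreover have "Complex (c - c') (e - e') = 0"
    by (rule eventually_inner_const_imp_zero[OF assms(1), where k = "Im d' - Im d"],
        rule eventually_mono[OF assms(2)])
      (auto simp: M M' mat2.simps inner_complex_def complex_eq_iff algebra_simps)
  ultimately have "M = M'"
    by (simp add: M M' complex_eq_iff)
  moreover have "d = d'"
    using eventually_nhds_x_imp_x[OF assms(2)] \<open>M = M'\<close> by simp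
  ultimately show ?thesis
    by simp
qed

end

section \<open>The chord condition\<close>

locale chord_condition = convex_boundary_curve +
  fixes U :: "(complex \<times> complex) set"
  assumes chords_distinct: "U \<subseteq> {(p, q). p \<noteq> q}"
    and chords_open: "openin (top_of_set (frontier K \<times> frontier K)) U"
    and chords_cover: "\<forall>p\<in>frontier K. \<exists>q. (p, q) \<in> U \<or> (q, p) \<in> U"
    and chord_identity: "\<forall>s t. (\<gamma> s, \<gamma> t) \<in> U \<longrightarrow>
           curvature \<gamma> s \<noteq> 0 \<and> curvature \<gamma> t \<noteq> 0 \<and>
           sin (line_angle (d1 \<gamma> s) (\<gamma> t - \<gamma> s)) ^ 3 / curvature \<gamma> s =
           sin (line_angle (d1 \<gamma> t) (\<gamma> t - \<gamma> s)) ^ 3 / curvature \<gamma> t"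
begin

lemma chord_through:
  obtains t where "(\<gamma> s, \<gamma> t) \<in> U \<or> (\<gamma> t, \<gamma> s) \<in> U"
proof -
  obtain q where q: "(\<gamma> s, q) \<in> U \<or> (q, \<gamma> s) \<in> U"
    using chords_cover frontier_eq_range by blast
  moreover have "U \<subseteq> frontier K \<times> frontier K"
    using openin_subset[OF chords_open] by simp
  ultimately have "q \<in> range \<gamma>"
    using frontier_eq_range by auto
  then show ?thesis
    using q that by blast
qed

lemma cross2_d1_d2_nonzero: "cross2 (d1 \<gamma> s) (d2 \<gamma> s) \<noteq> 0"
proof -
  obtain t where "(\<gamma> s, \<gamma> t) \<in> U \<or> (\<gamma> t, \<gamma> s) \<in> U"
    by (rule chord_through)
  then have "curvature \<gamma> s \<noteq> 0"
    using chord_identity by blast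
  then show ?thesis
    by (auto simp: curvature_def)
qed

lemma continuous_on_cross2_d1_d2: "continuous_on UNIV (\<lambda>s. cross2 (d1 \<gamma> s) (d2 \<gamma> s))"
  by (intro bounded_bilinear.continuous_on[OF bounded_bilinear_cross2] continuous_on_d1 continuous_on_d2)

definition \<rho> :: "real \<Rightarrow> real" where
  "\<rho> s = root 3 \<bar>cross2 (d1 \<gamma> s) (d2 \<gamma> s)\<bar>"

definition T :: "real \<Rightarrow> complex" where
  "T s = (1 / \<rho> s) *\<^sub>R d1 \<gamma> s"

lemma \<rho>_pos: "\<rho> s > 0"
  using cross2_d1_d2_nonzero by (simp add: \<rho>_def)

lemma \<rho>_cube: "\<rho> s ^ 3 = \<bar>cross2 (d1 \<gamma> s) (d2 \<gamma> s)\<bar>"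
  by (simp add: \<rho>_def)

lemma d1_eq_\<rho>_T: "d1 \<gamma> s = \<rho> s *\<^sub>R T s"
  using \<rho>_pos[of s] by (simp add: T_def)

lemma curvature_eq: "curvature \<gamma> s = \<rho> s ^ 3 / norm (d1 \<gamma> s) ^ 3"
  by (simp add: curvature_def \<rho>_cube)

definition parallel_chord :: "real \<Rightarrow> real \<Rightarrow> bool" where
  "parallel_chord s t \<longleftrightarrow> cross2 (T s + T t) (\<gamma> t - \<gamma> s) = 0"

lemma parallel_chord_commute: "parallel_chord s t \<longleftrightarrow> parallel_chord t s"
  using cross2_minus_right[of "T s + T t" "\<gamma> t - \<gamma> s"]
  by (simp add: parallel_chord_def add.commute)

lemma parallel_chord_if_in_U:
  assumes "(\<gamma> s, \<gamma> t) \<in> U"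
  shows "parallel_chord s t"
proof -
  obtain \<epsilon> where \<epsilon>: "\<epsilon> = 1 \<or> \<epsilon> = -1" "\<And>s y. y \<in> K \<Longrightarrow> \<epsilon> * cross2 (d1 \<gamma> s) (y - \<gamma> s) \<ge> 0"
    using tangent_side_sign by blast
  let ?c = "\<gamma> t - \<gamma> s"
  have "?c \<noteq> 0"
    using assms chords_distinct by auto
  have "sin (line_angle (d1 \<gamma> s) ?c) ^ 3 / curvature \<gamma> s = sin (line_angle (d1 \<gamma> t) ?c) ^ 3 / curvature \<gamma> t"
    using chord_identity assms by blast
  then have "(\<bar>cross2 (d1 \<gamma> s) ?c\<bar> / \<rho> s) ^ 3 / norm ?c ^ 3 = (\<bar>cross2 (d1 \<gamma> t) ?c\<bar> / \<rho> t) ^ 3 / norm ?c ^ 3"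
    unfolding curvature_eq sin_line_angle_cube_div[OF d1_nonzero \<open>?c \<noteq> 0\<close> \<rho>_pos] .
  then have "\<bar>cross2 (d1 \<gamma> s) ?c\<bar> / \<rho> s = \<bar>cross2 (d1 \<gamma> t) ?c\<bar> / \<rho> t"
    using \<open>?c \<noteq> 0\<close> by (simp add: power_eq_iff_eq_base \<rho>_pos less_imp_le)
  moreover have "\<bar>cross2 (d1 \<gamma> s) ?c\<bar> = \<epsilon> * cross2 (d1 \<gamma> s) ?c"
    using \<epsilon>(1) \<epsilon>(2)[OF curve_in_K, of s t] by (auto simp: abs_if)
  moreover have "\<bar>cross2 (d1 \<gamma> t) ?c\<bar> = - \<epsilon> * cross2 (d1 \<gamma> t) ?c"
    using \<epsilon>(1) \<epsilon>(2)[OF curve_in_K, of t s] cross2_minus_right[of "d1 \<gamma> t" ?c]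
    by (auto simp: abs_if)
  ultimately have "\<epsilon> * (cross2 (T s) ?c + cross2 (T t) ?c) = 0"
    by (simp add: T_def cross2_scaleR_left algebra_simps)
  then show ?thesis
    using \<epsilon>(1) by (auto simp: parallel_chord_def cross2_add_left)
qed

lemma open_vimage_chords:
  fixes h :: "'a::topological_space \<Rightarrow> complex \<times> complex"
  assumes "continuous_on UNIV h" "range h \<subseteq> frontier K \<times> frontier K"
  shows "open (h -` U)"
proof -
  obtain W where "open W" "U = (frontier K \<times> frontier K) \<inter> W"
    using chords_open by (auto simp: openin_open)
  then have "h -` U = h -` W"
    using assms(2) by auto
  then show ?thesis
    using open_vimage[OF \<open>open W\<close> assms(1)] by simp
qed

lemma eventually_parallel_chord:
  obtains t0 where "\<forall>\<^sub>F p in nhds (s0, t0). parallel_chord (fst p) (snd p)"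
proof -
  obtain t0 where t0: "(\<gamma> s0, \<gamma> t0) \<in> U \<or> (\<gamma> t0, \<gamma> s0) \<in> U"
    by (rule chord_through)
  define V where "V = (\<lambda>p. (\<gamma> (fst p), \<gamma> (snd p))) -` U \<union> (\<lambda>p. (\<gamma> (snd p), \<gamma> (fst p))) -` U"
  have "open V"
    unfolding V_def using frontier_eq_range
    by (intro open_Un open_vimage_chords continuous_on_Pair
        continuous_on_compose2[OF continuous_on_curve] continuous_intros) auto
  moreover have "(s0, t0) \<in> V"
    using t0 by (simp add: V_def)
  ultimately have "\<forall>\<^sub>F p in nhds (s0, t0). p \<in> V"
    by (rule eventually_nhds_in_open)
  then show ?thesis
  proof (rule that[OF eventually_mono])
    fix p
    assume "p \<in> V"
    then show "parallel_chord (fst p) (snd p)"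
      using parallel_chord_if_in_U[of "fst p" "snd p"] parallel_chord_if_in_U[of "snd p" "fst p"]
        parallel_chord_commute[of "fst p" "snd p"]
      unfolding V_def by blast
  qed
qed

lemma parallel_chord_cross2_diff:
  assumes "parallel_chord s t0" "parallel_chord s t"
  shows "cross2 (T s) (\<gamma> t - \<gamma> t0) = (cross2 (T t0) (\<gamma> t0) - cross2 (T t) (\<gamma> t)) + cross2 (T t - T t0) (\<gamma> s)"
  using assms unfolding parallel_chord_def
  by (simp add: cross2_add_left cross2_diff_left cross2_diff_right algebra_simps)

lemma T_locally_affine: "\<exists>M d. \<forall>\<^sub>F s in nhds s0. T s = mat2 M (\<gamma> s) + d"
proof -
  obtain t0 where "\<forall>\<^sub>F p in nhds (s0, t0). parallel_chord (fst p) (snd p)"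
    by (rule eventually_parallel_chord)
  then obtain P Q where P: "eventually P (nhds s0)" and Q: "eventually Q (nhds t0)"
    and PQ: "\<And>s t. P s \<Longrightarrow> Q t \<Longrightarrow> parallel_chord s t"
    unfolding nhds_prod eventually_prod_filter fst_conv snd_conv by blast
  obtain t1 t2 where t12: "Q t1" "Q t2" and indep: "cross2 (\<gamma> t1 - \<gamma> t0) (\<gamma> t2 - \<gamma> t0) \<noteq> 0"
    by (rule exists_noncollinear_chords[OF cross2_d1_d2_nonzero Q])
  have "Q t0"
    using Q by (rule eventually_nhds_x_imp_x)
  obtain M d where Md: "\<And>z w.
      cross2 w (\<gamma> t1 - \<gamma> t0) = (cross2 (T t0) (\<gamma> t0) - cross2 (T t1) (\<gamma> t1)) + cross2 (T t1 - T t0) z \<Longrightarrow>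
      cross2 w (\<gamma> t2 - \<gamma> t0) = (cross2 (T t0) (\<gamma> t0) - cross2 (T t2) (\<gamma> t2)) + cross2 (T t2 - T t0) z \<Longrightarrow>
      w = mat2 M z + d"
    using affine_in_cross2_imp_mat2[OF indep,
        where k = "cross2 (T t0) (\<gamma> t0) - cross2 (T t1) (\<gamma> t1)" and p = "T t1 - T t0"
          and l = "cross2 (T t0) (\<gamma> t0) - cross2 (T t2) (\<gamma> t2)" and q = "T t2 - T t0"]
    by blast
  have "\<forall>\<^sub>F s in nhds s0. T s = mat2 M (\<gamma> s) + d"
    using P by (rule eventually_mono) (intro Md parallel_chord_cross2_diff PQ t12 \<open>Q t0\<close>)
  then show ?thesis
    by blast
qed

lemma T_affine:
  obtains M d where "\<And>s. T s = mat2 M (\<gamma> s) + d"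
proof -
  have exists: "\<exists>Md. \<forall>\<^sub>F s in nhds s0. T s = mat2 (fst Md) (\<gamma> s) + snd Md" for s0
    using T_locally_affine[of s0] by auto
  have unique: "Md = Md'"
    if "\<forall>\<^sub>F s in nhds s0. T s = mat2 (fst Md) (\<gamma> s) + snd Md"
      and "\<forall>\<^sub>F s in nhds s0. T s = mat2 (fst Md') (\<gamma> s) + snd Md'" for s0 Md Md'
  proof -
    have "\<forall>\<^sub>F s in nhds s0. mat2 (fst Md) (\<gamma> s) + snd Md = mat2 (fst Md') (\<gamma> s) + snd Md'"
      using eventually_conj[OF that] by (rule eventually_mono) metis
    then show ?thesis
      using eventually_mat2_unique[OF cross2_d1_d2_nonzero] by (simp add: prod_eq_iff)
  qed
  have "\<exists>Md. \<forall>s. T s = mat2 (fst Md) (\<gamma> s) + snd Md"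
    using exists unique by (rule locally_unique_witness_global[OF connected_UNIV])
  then show ?thesis
    using that by blast
qed

lemma cross2_T_mat2_T:
  assumes T_eq: "\<And>s. T s = mat2 M (\<gamma> s) + d"
  shows "cross2 (T s) (mat2 M (T s)) = sgn (cross2 (d1 \<gamma> s) (d2 \<gamma> s))"
proof -
  let ?A = "mat2 M"
  have "T = (\<lambda>t. ?A (\<gamma> t) + d)"
    using T_eq by (simp add: fun_eq_iff)
  then have "(T has_vector_derivative ?A (d1 \<gamma> s)) (at s)"
    using has_vector_derivative_mat2[OF has_vector_derivative_d1]
    by (simp add: has_vector_derivative_add_const)
  then have T_deriv: "(T has_vector_derivative \<rho> s *\<^sub>R ?A (T s)) (at s)"
    by (simp add: d1_eq_\<rho>_T mat2_scaleR)
  have "((\<lambda>t. cross2 (T t) (d1 \<gamma> t)) has_real_derivative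
      cross2 (T s) (d2 \<gamma> s) + cross2 (\<rho> s *\<^sub>R ?A (T s)) (d1 \<gamma> s)) (at s)"
    by (rule has_real_derivative_cross2[OF T_deriv has_vector_derivative_d2])
  moreover have "cross2 (T t) (d1 \<gamma> t) = 0" for t
    by (simp add: d1_eq_\<rho>_T cross2_scaleR_right)
  ultimately have "cross2 (T s) (d2 \<gamma> s) + cross2 (\<rho> s *\<^sub>R ?A (T s)) (d1 \<gamma> s) = 0"
    by (intro DERIV_eventually_const_imp_zero) auto
  then have "cross2 (T s) (d2 \<gamma> s) = \<rho> s ^ 2 * cross2 (T s) (?A (T s))"
    using cross2_commute[of "?A (T s)" "T s"]
    by (simp add: d1_eq_\<rho>_T cross2_scaleR_left cross2_scaleR_right power2_eq_square algebra_simps)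
  then have "cross2 (d1 \<gamma> s) (d2 \<gamma> s) = \<rho> s ^ 3 * cross2 (T s) (?A (T s))"
    by (simp add: d1_eq_\<rho>_T cross2_scaleR_left power2_eq_square power3_eq_cube)
  then have "cross2 (d1 \<gamma> s) (d2 \<gamma> s) = \<bar>cross2 (d1 \<gamma> s) (d2 \<gamma> s)\<bar> * cross2 (T s) (?A (T s))"
    unfolding \<rho>_cube .
  then have "cross2 (T s) (?A (T s)) = cross2 (d1 \<gamma> s) (d2 \<gamma> s) / \<bar>cross2 (d1 \<gamma> s) (d2 \<gamma> s)\<bar>"
    using cross2_d1_d2_nonzero[of s] by (simp add: eq_divide_eq mult.commute)
  then show ?thesis
    by (simp add: real_sgn_eq)
qed

lemma affine_velocity_field:
  obtains a b c e d \<sigma> where "\<sigma> \<noteq> 0"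
    "\<And>s. d1 \<gamma> s = \<rho> s *\<^sub>R (mat2 (a, b, c, e) (\<gamma> s) + d)"
    "\<And>s. cross2 (mat2 (a, b, c, e) (\<gamma> s) + d) (mat2 (a, b, c, e) (mat2 (a, b, c, e) (\<gamma> s) + d)) = \<sigma>"
proof -
  obtain M d where T_eq: "\<And>s. T s = mat2 M (\<gamma> s) + d"
    using T_affine by blast
  obtain a b c e where M: "M = (a, b, c, e)"
    by (cases M)
  have sgn_const: "sgn (cross2 (d1 \<gamma> s) (d2 \<gamma> s)) = sgn (cross2 (d1 \<gamma> 0) (d2 \<gamma> 0))" for s
    by (rule continuous_on_nonzero_sgn_eq[OF connected_UNIV continuous_on_cross2_d1_d2])
      (simp_all add: cross2_d1_d2_nonzero)
  show ?thesis
  proof (rule that[of "sgn (cross2 (d1 \<gamma> 0) (d2 \<gamma> 0))" a b c e d])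
    show "sgn (cross2 (d1 \<gamma> 0) (d2 \<gamma> 0)) \<noteq> 0"
      using cross2_d1_d2_nonzero by (simp add: sgn_0_0)
    show "d1 \<gamma> s = \<rho> s *\<^sub>R (mat2 (a, b, c, e) (\<gamma> s) + d)" for s
      using d1_eq_\<rho>_T T_eq M by simp
    show "cross2 (mat2 (a, b, c, e) (\<gamma> s) + d) (mat2 (a, b, c, e) (mat2 (a, b, c, e) (\<gamma> s) + d))
        = sgn (cross2 (d1 \<gamma> 0) (d2 \<gamma> 0))" for s
      using cross2_T_mat2_T[OF T_eq, of s] sgn_const T_eq M by simp
  qed
qed

end

section \<open>Closed curves tangent to an affine vector field\<close>

locale affine_velocity_loop =
  fixes \<gamma> :: "real \<Rightarrow> complex" and \<rho> :: "real \<Rightarrow> real" and a b c e :: real and d :: complex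
    and \<sigma> L :: real
  assumes velocity: "\<And>s. (\<gamma> has_vector_derivative \<rho> s *\<^sub>R (mat2 (a, b, c, e) (\<gamma> s) + d)) (at s)"
    and speed_pos: "\<And>s. \<rho> s > 0"
    and cross2_field: "\<And>s. cross2 (mat2 (a, b, c, e) (\<gamma> s) + d) (mat2 (a, b, c, e) (mat2 (a, b, c, e) (\<gamma> s) + d)) = \<sigma>"
    and \<sigma>_nonzero: "\<sigma> \<noteq> 0"
    and period_pos: "L > 0"
    and closed: "\<gamma> L = \<gamma> 0"
begin

abbreviation A :: "complex \<Rightarrow> complex" where
  "A \<equiv> mat2 (a, b, c, e)"

definition Y :: "real \<Rightarrow> complex" where
  "Y s = A (\<gamma> s) + d"

lemma cross2_Y: "cross2 (Y s) (A (Y s)) = \<sigma>"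
  using cross2_field by (simp add: Y_def)

lemma has_vector_derivative_Y: "(Y has_vector_derivative \<rho> s *\<^sub>R A (Y s)) (at s)"
proof -
  have "((\<lambda>t. A (\<gamma> t) + d) has_vector_derivative A (\<rho> s *\<^sub>R (A (\<gamma> s) + d))) (at s)"
    using has_vector_derivative_mat2[OF velocity] by (simp add: has_vector_derivative_add_const)
  then show ?thesis
    unfolding Y_def[abs_def] by (simp add: mat2_scaleR)
qed

lemma has_vector_derivative_AY: "((\<lambda>t. A (Y t)) has_vector_derivative \<rho> s *\<^sub>R A (A (Y s))) (at s)"
  using has_vector_derivative_mat2[OF has_vector_derivative_Y] by (simp add: mat2_scaleR)

lemma trace_zero: "a + e = 0"
proof -
  have "((\<lambda>t. cross2 (Y t) (A (Y t))) has_real_derivative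
      cross2 (Y 0) (\<rho> 0 *\<^sub>R A (A (Y 0))) + cross2 (\<rho> 0 *\<^sub>R A (Y 0)) (A (Y 0))) (at 0)"
    by (rule has_real_derivative_cross2[OF has_vector_derivative_Y has_vector_derivative_AY])
  then have "cross2 (Y 0) (\<rho> 0 *\<^sub>R A (A (Y 0))) + cross2 (\<rho> 0 *\<^sub>R A (Y 0)) (A (Y 0)) = 0"
    by (rule DERIV_eventually_const_imp_zero) (simp add: cross2_Y)
  then have "\<rho> 0 * ((a + e) * \<sigma>) = 0"
    by (simp add: cross2_scaleR_left cross2_scaleR_right cross2_mat2_mat2 cross2_Y)
  then show ?thesis
    using speed_pos[of 0] \<sigma>_nonzero by simp
qed

text \<open>As \<open>A\<^sup>2 = k\<^sup>2\<close>, \<open>\<phi> = Y \<bullet> (A Y + k Y)\<close> has derivative \<open>\<rho> \<bar>A Y + k Y\<bar>\<^sup>2 \<ge> 0\<close> and returns to its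
  initial value, so by Rolle's theorem \<open>A Y + k Y\<close> vanishes somewhere.\<close>

lemma eigenvector_on_loop:
  assumes AA: "\<And>z. A (A z) = (k * k) *\<^sub>R z"
  obtains z where "A (Y z) = - k *\<^sub>R Y z"
proof -
  define u where "u t = A (Y t) + k *\<^sub>R Y t" for t
  have u_deriv: "(u has_vector_derivative (\<rho> s * k) *\<^sub>R u s) (at s)" for s
  proof -
    have "(u has_vector_derivative \<rho> s *\<^sub>R A (A (Y s)) + k *\<^sub>R (\<rho> s *\<^sub>R A (Y s))) (at s)"
      unfolding u_def[abs_def]
      by (intro has_vector_derivative_add has_vector_derivative_AY
          bounded_linear.has_vector_derivative[OF bounded_linear_scaleR_right has_vector_derivative_Y])
    then show ?thesis
      by (simp add: u_def AA algebra_simps)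
  qed
  define \<phi> where "\<phi> t = Y t \<bullet> u t" for t
  have \<phi>_deriv: "(\<phi> has_real_derivative \<rho> s * (u s \<bullet> u s)) (at s)" for s
  proof -
    have "(\<phi> has_real_derivative Y s \<bullet> ((\<rho> s * k) *\<^sub>R u s) + (\<rho> s *\<^sub>R A (Y s)) \<bullet> u s) (at s)"
      unfolding \<phi>_def[abs_def] has_real_derivative_iff_has_vector_derivative
      by (rule bounded_bilinear.has_vector_derivative[OF bounded_bilinear_inner has_vector_derivative_Y u_deriv])
    moreover have "Y s \<bullet> ((\<rho> s * k) *\<^sub>R u s) + (\<rho> s *\<^sub>R A (Y s)) \<bullet> u s = \<rho> s * (u s \<bullet> u s)"
      by (simp add: u_def inner_add_left inner_add_right algebra_simps)
    ultimately show ?thesis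
      by simp
  qed
  have "\<phi> 0 = \<phi> L"
    using closed by (simp add: \<phi>_def u_def Y_def)
  then obtain z where "\<rho> z * (u z \<bullet> u z) = 0"
    using Rolle_DERIV[OF period_pos _ \<phi>_deriv] by blast
  then have "A (Y z) = - k *\<^sub>R Y z"
    using speed_pos[of z] by (simp add: u_def eq_neg_iff_add_eq_0)
  then show ?thesis
    by (rule that)
qed

lemma det_pos: "a * e - b * c > 0"
proof (rule ccontr)
  assume not_pos: "\<not> a * e - b * c > 0"
  define k where "k = sqrt (b * c - a * e)"
  have "A (A z) = (k * k) *\<^sub>R z" for z
    using mat2_mat2_traceless[of e a b c z] trace_zero not_pos by (simp add: k_def)
  then obtain z where "A (Y z) = - k *\<^sub>R Y z"
    by (rule eigenvector_on_loop)
  then have "cross2 (Y z) (A (Y z)) = 0"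
    by (simp add: cross2_minus_right cross2_scaleR_right)
  then show False
    using cross2_Y \<sigma>_nonzero by simp
qed

text \<open>Since \<open>A\<^sup>2 = - det A\<close>, this is \<open>- A\<inverse> d\<close>.\<close>

definition center :: complex where
  "center = (1 / (a * e - b * c)) *\<^sub>R A d"

lemma Y_eq_mat2_center: "Y s = A (\<gamma> s - center)"
proof -
  have e: "e = - a"
    using trace_zero by simp
  have det: "1 / (a * e - b * c) * - (a * e - b * c) = -1"
    using det_pos by (simp add: field_simps)
  have "A center = (1 / (a * e - b * c) * - (a * e - b * c)) *\<^sub>R d"
    unfolding center_def mat2_scaleR by (simp only: mat2_mat2_traceless[OF e] scaleR_scaleR)
  then have "A center = - d"
    unfolding det by simp
  then show ?thesis
    by (simp add: Y_def mat2_diff)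
qed

lemma quadratic_form_constant:
  "cross2 (\<gamma> s - center) (A (\<gamma> s - center)) = cross2 (\<gamma> 0 - center) (A (\<gamma> 0 - center))"
proof -
  have "((\<lambda>t. cross2 (\<gamma> t - center) (A (\<gamma> t - center))) has_real_derivative 0) (at x)" for x
  proof -
    have vel: "((\<lambda>t. \<gamma> t - center) has_vector_derivative \<rho> x *\<^sub>R Y x) (at x)"
      using velocity[of x] by (simp add: Y_def has_vector_derivative_diff_const)
    have "((\<lambda>t. cross2 (\<gamma> t - center) (A (\<gamma> t - center))) has_real_derivative
        cross2 (\<gamma> x - center) (A (\<rho> x *\<^sub>R Y x)) + cross2 (\<rho> x *\<^sub>R Y x) (A (\<gamma> x - center))) (at x)"
      by (rule has_real_derivative_cross2[OF vel has_vector_derivative_mat2[OF vel]])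
    moreover have "cross2 (\<gamma> x - center) (A (\<rho> x *\<^sub>R Y x)) = cross2 (\<rho> x *\<^sub>R Y x) (A (\<gamma> x - center))"
      using trace_zero by (intro cross2_mat2_traceless_commute) simp
    ultimately show ?thesis
      by (simp add: cross2_scaleR_left flip: Y_eq_mat2_center)
  qed
  then show ?thesis
    by (rule DERIV_isconst_all[rule_format])
qed

lemma curve_on_ellipse:
  obtains c0 and g :: "complex \<Rightarrow> complex"
  where "linear g" "inj g" "\<And>s. norm (g (\<gamma> s - c0)) = 1"
proof -
  define m where "m = cross2 (\<gamma> 0 - center) (A (\<gamma> 0 - center))"
  have e: "e = - a"
    using trace_zero by simp
  have "\<gamma> 0 - center \<noteq> 0"
    using cross2_Y[of 0] \<sigma>_nonzero by (auto simp: Y_eq_mat2_center linear_0[OF linear_mat2])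
  then have "c * m > 0"
    unfolding m_def using cross2_mat2_traceless_pos[OF e det_pos] by blast
  obtain g :: "complex \<Rightarrow> complex"
    where g: "linear g" "inj g" "\<And>y. (norm (g y))\<^sup>2 = cross2 y (A y) / m"
    using mat2_traceless_form_eq_norm_square[OF e det_pos \<open>c * m > 0\<close>] by blast
  have "(norm (g (\<gamma> s - center)))\<^sup>2 = 1\<^sup>2" for s
    using g(3) quadratic_form_constant[of s] \<open>c * m > 0\<close> by (auto simp: m_def)
  then have "norm (g (\<gamma> s - center)) = 1" for s
    by (rule power2_eq_imp_eq) simp_all
  then show ?thesis
    using that g(1,2) by blast
qed

end

section \<open>Convex bodies bounded by an ellipse\<close>

lemma norm_linear_convex_combination:
  fixes g :: "'a::real_vector \<Rightarrow> 'b::real_normed_vector"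
  assumes "linear g" "0 \<le> u" "u \<le> 1"
  shows "norm (g ((1 - u) *\<^sub>R x + u *\<^sub>R y - c)) \<le> (1 - u) * norm (g (x - c)) + u * norm (g (y - c))"
proof -
  have "(1 - u) *\<^sub>R x + u *\<^sub>R y - c = (1 - u) *\<^sub>R (x - c) + u *\<^sub>R (y - c)"
    by (simp add: algebra_simps)
  then have "g ((1 - u) *\<^sub>R x + u *\<^sub>R y - c) = (1 - u) *\<^sub>R g (x - c) + u *\<^sub>R g (y - c)"
    using assms(1) by (simp add: linear_add linear_scale)
  then show ?thesis
    using assms(2,3) norm_triangle_ineq[of "(1 - u) *\<^sub>R g (x - c)" "u *\<^sub>R g (y - c)"] by simp
qed

lemma convex_norm_linear_sublevel:
  fixes g :: "'a::real_vector \<Rightarrow> 'b::real_normed_vector"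
  assumes "linear g"
  shows "convex {x. norm (g (x - c)) \<le> 1}"
  unfolding convex_alt
proof (intro ballI allI impI, elim conjE)
  fix x y and u :: real
  assume "x \<in> {x. norm (g (x - c)) \<le> 1}" "y \<in> {x. norm (g (x - c)) \<le> 1}" "0 \<le> u" "u \<le> 1"
  then have "(1 - u) * norm (g (x - c)) + u * norm (g (y - c)) \<le> (1 - u) * 1 + u * 1"
    by (intro add_mono mult_left_mono) auto
  then show "(1 - u) *\<^sub>R x + u *\<^sub>R y \<in> {x. norm (g (x - c)) \<le> 1}"
    using norm_linear_convex_combination[OF assms \<open>0 \<le> u\<close> \<open>u \<le> 1\<close>, of x y c] by simp
qed

lemma norm_linear_lt_one_at_interior:
  fixes g :: "'a::real_normed_vector \<Rightarrow> 'b::real_normed_vector"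
  assumes "linear g" "K \<subseteq> {x. norm (g (x - c)) \<le> 1}" "z \<in> interior K"
  shows "norm (g (z - c)) < 1"
proof (rule ccontr)
  assume not_lt: "\<not> norm (g (z - c)) < 1"
  then have "z \<noteq> c"
    using linear_0[OF assms(1)] by auto
  obtain r where r: "r > 0" "ball z r \<subseteq> K"
    using assms(3) mem_interior by blast
  define t where "t = r / (2 * norm (z - c))"
  have t: "t > 0" "t * norm (z - c) < r"
    using r(1) \<open>z \<noteq> c\<close> by (simp_all add: t_def)
  define x where "x = z + t *\<^sub>R (z - c)"
  have "x \<in> K"
    using r(2) t by (auto simp: x_def dist_norm)
  have "x - c = (1 + t) *\<^sub>R (z - c)"
    by (simp add: x_def algebra_simps)
  then have "norm (g (x - c)) = (1 + t) * norm (g (z - c))"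
    using assms(1) t(1) by (simp add: linear_scale)
  also have "\<dots> > 1"
    using not_lt t(1) by (smt (verit) mult_le_cancel_left1)
  finally show False
    using assms(2) \<open>x \<in> K\<close> by auto
qed

lemma convex_body_eq_norm_linear_sublevel:
  fixes g :: "'a::euclidean_space \<Rightarrow> 'b::real_normed_vector"
  assumes "linear g" "compact K" "convex K" "interior K \<noteq> {}"
    and frontier: "\<And>x. x \<in> frontier K \<Longrightarrow> norm (g (x - c)) = 1"
  shows "K = {x. norm (g (x - c)) \<le> 1}"
proof
  let ?B = "{x. norm (g (x - c)) \<le> 1}"
  have "convex ?B"
    by (rule convex_norm_linear_sublevel[OF assms(1)])
  then have "convex hull (frontier K) \<subseteq> ?B"
    using frontier by (intro hull_minimal) auto
  then show K_sub: "K \<subseteq> ?B"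
    using Krein_Milman_frontier[OF assms(3,2)] by simp
  obtain z where z: "z \<in> interior K"
    using assms(4) by blast
  show "?B \<subseteq> K"
  proof
    fix x
    assume x: "x \<in> ?B"
    show "x \<in> K"
    proof (rule ccontr)
      assume "x \<notin> K"
      then obtain y where "y \<in> closed_segment z x" "y \<in> frontier K"
        using connected_Int_frontier[OF connected_segment, of z x K] z interior_subset by blast
      then obtain u where u: "0 \<le> u" "u \<le> 1" "y = (1 - u) *\<^sub>R z + u *\<^sub>R x"
        by (auto simp: in_segment)
      have "u \<noteq> 1"
        using u(3) \<open>y \<in> frontier K\<close> \<open>x \<notin> K\<close> frontier_subset_closed[OF compact_imp_closed[OF assms(2)]]
        by auto
      have "norm (g (y - c)) \<le> (1 - u) * norm (g (z - c)) + u * norm (g (x - c))"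
        using norm_linear_convex_combination[OF assms(1) u(1,2)] u(3) by simp
      also have "\<dots> < (1 - u) * 1 + u * 1"
        using norm_linear_lt_one_at_interior[OF assms(1) K_sub z] x u(1,2) \<open>u \<noteq> 1\<close>
        by (intro add_less_le_mono mult_strict_left_mono mult_left_mono) auto
      finally show False
        using frontier[OF \<open>y \<in> frontier K\<close>] by simp
    qed
  qed
qed

lemma is_ellipse_norm_linear_sublevel:
  fixes g :: "complex \<Rightarrow> complex"
  assumes "linear g" "inj g"
  shows "is_ellipse {x. norm (g (x - c)) \<le> 1}"
proof -
  obtain h where h: "linear h" "\<And>x. h (g x) = x" "\<And>x. g (h x) = x"
    using linear_injective_isomorphism[of g] assms by auto
  have "{x. norm (g (x - c)) \<le> 1} = (\<lambda>z. c + h z) ` cball 0 1"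
  proof (intro equalityI subsetI)
    fix x
    assume "x \<in> {x. norm (g (x - c)) \<le> 1}"
    then show "x \<in> (\<lambda>z. c + h z) ` cball 0 1"
      by (intro image_eqI[of _ _ "g (x - c)"]) (simp_all add: h(2))
  qed (auto simp: h(3))
  moreover have "inj h"
    by (metis h(3) injI)
  ultimately show ?thesis
    unfolding is_ellipse_def using h(1) by blast
qed

theorem theorem4p7:
  fixes K :: "complex set" and \<gamma> :: "real \<Rightarrow> complex" and L :: real
    and U :: "(complex \<times> complex) set"
  assumes "convex_body K"
    and "C2_regular_boundary_param K \<gamma> L"
    and "U \<subseteq> {(p, q). p \<noteq> q}"
    and "openin (top_of_set (frontier K \<times> frontier K)) U"
    and "\<forall>p\<in>frontier K. \<exists>q. (p, q) \<in> U \<or> (q, p) \<in> U"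
    and "\<forall>s t. (\<gamma> s, \<gamma> t) \<in> U \<longrightarrow>
           curvature \<gamma> s \<noteq> 0 \<and> curvature \<gamma> t \<noteq> 0 \<and>
           sin (line_angle (d1 \<gamma> s) (\<gamma> t - \<gamma> s)) ^ 3 / curvature \<gamma> s =
           sin (line_angle (d1 \<gamma> t) (\<gamma> t - \<gamma> s)) ^ 3 / curvature \<gamma> t"
  shows "is_ellipse K"
proof -
  interpret chord_condition K \<gamma> L U
    using assms by unfold_locales auto
  obtain a b c e d \<sigma> where field: "\<sigma> \<noteq> 0"
    "\<And>s. d1 \<gamma> s = \<rho> s *\<^sub>R (mat2 (a, b, c, e) (\<gamma> s) + d)"
    "\<And>s. cross2 (mat2 (a, b, c, e) (\<gamma> s) + d) (mat2 (a, b, c, e) (mat2 (a, b, c, e) (\<gamma> s) + d)) = \<sigma>"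
    by (rule affine_velocity_field) blast
  have "(\<gamma> has_vector_derivative \<rho> s *\<^sub>R (mat2 (a, b, c, e) (\<gamma> s) + d)) (at s)" for s
    using has_vector_derivative_d1[of s] unfolding field(2) .
  then interpret affine_velocity_loop \<gamma> \<rho> a b c e d \<sigma> L
    using field(1,3) \<rho>_pos period_pos periodic[of 0] by unfold_locales simp_all
  obtain c0 and g :: "complex \<Rightarrow> complex"
    where g: "linear g" "inj g" "\<And>s. norm (g (\<gamma> s - c0)) = 1"
    using curve_on_ellipse by blast
  have "K = {x. norm (g (x - c0)) \<le> 1}"
    using assms(1) g(1,3) frontier_eq_range
    by (intro convex_body_eq_norm_linear_sublevel) (auto simp: convex_body_def)
  then show ?thesis
    using is_ellipse_norm_linear_sublevel[OF g(1,2)] by simp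
qed

end
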